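(* Let $G=(V,E)$ be a directed graph whose edges are given on the external tape of a RATM-BIO in an arbitrary order. Then the worst-case external access trace complexity of the DFS-Random Access algorithm (described in the context) executed on a RATM-BIO is $O(|E|^2)$.
   Context: A RATM-BIO (random access Turing machine with blocking IO) has a main memory tape with its address tape and an external memory tape with its address tape; a main head with random access on the main tape (jumping in one step to the cell whose index is on the main address tape when entering a random access state) and an external head that moves only one cell at a time on the external tape. Transitions are main memory computation transitions (main head moves, external head halts), external memory access transitions (external head moves one step, main head halts), and read/write transitions: on entering a read (write) state an external address is written, the main head halts and the external head moves step by step to the designated external cell; when reached, the content of that cell replaces (is replaced by) the content of the main memory cell under the main head, and main memory computation resumes. The external access trace complexity is the total number of moves of the external head. Semi-external setting: main memory has size $O(|V|)$; it holds an array $free[\cdot]$ indexed by vertices and a stack. DFS-Random Access algorithm: set $free[u]=1$ for all vertices $u$; for each vertex $u$: push $u$ on an empty stack; while the stack is nonempty, pop $v$; if $free[v]=1$, set $free[v]=0$ and, for each neighbor $w$ of $v$ (each edge $(v,w)$ being read individually from the external tape), if $free[w]=1$ push $w$. *)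

theory Defs
  imports Main
begin

text \<open>
  Model of the DFS-Random Access algorithm on a RATM-BIO, keeping track only of
  the quantity relevant for the external access trace complexity: the position
  of the external head and the total number of its moves.

  Vertices are the naturals 0..n-1; the main-memory array free is a bool list of
  length n (free!v = True means free[v] = 1).  The external tape holds the edge
  list es, one edge per cell, cell i containing es!i, in arbitrary order.  The
  external head starts on cell 0.  Reading cell i moves the external head step
  by step from its current cell p to cell i, i.e. |p - i| moves.

  ord v is the list of external addresses (cells) of the edges (v,w) leaving v,
  in the order in which the algorithm reads them.
\<close>

definition head_dist :: "nat \<Rightarrow> nat \<Rightarrow> nat" where
  "head_dist p i = (if p \<le> i then i - p else p - i)"

text \<open>Read the edges at the given addresses, starting with the head at pos.
  Returns (final head position, number of head moves, targets read in order).\<close>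
fun read_edges :: "(nat \<times> nat) list \<Rightarrow> nat list \<Rightarrow> nat \<Rightarrow> nat \<times> nat \<times> nat list" where
  "read_edges es [] pos = (pos, 0, [])"
| "read_edges es (i # is) pos =
     (case read_edges es is i of (p', c, ws) \<Rightarrow> (p', head_dist pos i + c, snd (es ! i) # ws))"

text \<open>The stack loop. The stack is a list with its top at the head.
  Arguments: tape, read orders, free array, stack, head position, accumulated cost.\<close>
function dfs_loop :: "(nat \<times> nat) list \<Rightarrow> (nat \<Rightarrow> nat list) \<Rightarrow> bool list \<Rightarrow> nat list
    \<Rightarrow> nat \<Rightarrow> nat \<Rightarrow> bool list \<times> nat \<times> nat" where
  "dfs_loop es ord fr [] pos cost = (fr, pos, cost)"
| "dfs_loop es ord fr (v # st) pos cost =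
     (if v < length fr \<and> fr ! v then
        (let fr' = fr[v := False] in
         case read_edges es (ord v) pos of (pos', c, ws) \<Rightarrow>
           dfs_loop es ord fr'
             (rev (filter (\<lambda>w. w < length fr' \<and> fr' ! w) ws) @ st) pos' (cost + c))
      else dfs_loop es ord fr st pos cost)"
  by pat_completeness auto

lemma count_list_update_False:
  assumes "v < length fr" "fr ! v"
  shows "count_list (fr[v := False]) True < count_list fr True"
  using assms
proof (induction fr arbitrary: v)
  case Nil then show ?case by simp
next
  case (Cons a fr)
  then show ?case by (cases v) auto
qed

termination
  apply (relation "measures [\<lambda>(es, ord, fr, st, pos, cost). count_list fr True,
                             \<lambda>(es, ord, fr, st, pos, cost). length st]")
    apply (auto simp: count_list_update_False)
  done

fun dfs_outer :: "(nat \<times> nat) list \<Rightarrow> (nat \<Rightarrow> nat list) \<Rightarrow> bool list \<Rightarrow> nat list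
    \<Rightarrow> nat \<Rightarrow> nat \<Rightarrow> nat" where
  "dfs_outer es ord fr [] pos cost = cost"
| "dfs_outer es ord fr (u # us) pos cost =
     (case dfs_loop es ord fr [u] pos cost of (fr', pos', cost') \<Rightarrow>
        dfs_outer es ord fr' us pos' cost')"

definition dfs_ra_trace :: "nat \<Rightarrow> (nat \<times> nat) list \<Rightarrow> (nat \<Rightarrow> nat list) \<Rightarrow> nat" where
  "dfs_ra_trace n es ord = dfs_outer es ord (replicate n True) [0..<n] 0 0"

end

theory Submission
  imports Defs
begin

text \<open>
  Every access moves the external head to a cell of the edge tape, so it costs at most
  m = |E| moves; and each address is read at most once, namely when its source vertex is
  popped while still free.  Amortised over the potential "m times the number of edge
  addresses of the still free vertices", which is at most m initially, the total cost is
  at most m * m.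
\<close>

definition pending_reads :: "(nat \<Rightarrow> nat list) \<Rightarrow> bool list \<Rightarrow> nat" where
  "pending_reads ord fr = (\<Sum>v\<in>{v. v < length fr \<and> fr ! v}. length (ord v))"

lemma head_dist_le: "pos \<le> m \<Longrightarrow> i < m \<Longrightarrow> head_dist pos i \<le> m"
  by (auto simp: head_dist_def)

lemma read_edges_cost_le:
  assumes "read_edges es xs pos = (pos', c, ws)" "pos \<le> m" "\<forall>i\<in>set xs. i < m"
  shows "c \<le> m * length xs \<and> pos' \<le> m"
  using assms
proof (induction xs arbitrary: pos pos' c ws)
  case Nil
  then show ?case by simp
next
  case (Cons i xs)
  obtain p c' ws' where rest: "read_edges es xs i = (p, c', ws')"
    by (metis prod_cases3)
  have "c' \<le> m * length xs \<and> p \<le> m"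
    using Cons rest by auto
  moreover have "head_dist pos i \<le> m"
    using Cons.prems by (auto intro: head_dist_le)
  ultimately show ?case
    using Cons.prems rest by auto
qed

lemma pending_reads_update_False:
  assumes "v < length fr" "fr ! v"
  shows "pending_reads ord fr = pending_reads ord (fr[v := False]) + length (ord v)"
proof -
  let ?F = "{w. w < length (fr[v := False]) \<and> fr[v := False] ! w}"
  have "{w. w < length fr \<and> fr ! w} = insert v ?F"
    using assms by (auto simp: nth_list_update split: if_splits)
  moreover have "v \<notin> ?F"
    by simp
  ultimately show ?thesis
    unfolding pending_reads_def by simp
qed

lemma dfs_loop_amortised_cost:
  assumes "dfs_loop es ord fr st pos cost = (fr', pos', cost')" "pos \<le> m"
    and "\<forall>v<length fr. \<forall>i\<in>set (ord v). i < m"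
  shows "cost' + m * pending_reads ord fr' \<le> cost + m * pending_reads ord fr
    \<and> pos' \<le> m \<and> length fr' = length fr"
  using assms
proof (induction es ord fr st pos cost arbitrary: fr' pos' cost' rule: dfs_loop.induct)
  case (1 es ord fr pos cost)
  then show ?case by simp
next
  case (2 es ord fr v st pos cost)
  show ?case
  proof (cases "v < length fr \<and> fr ! v")
    case True
    obtain p c ws where read: "read_edges es (ord v) pos = (p, c, ws)"
      by (metis prod_cases3)
    have read_cost: "c \<le> m * length (ord v) \<and> p \<le> m"
      using read_edges_cost_le[OF read] "2.prems" True by auto
    define fr1 where "fr1 = fr[v := False]"
    have "dfs_loop es ord fr1 (rev (filter (\<lambda>w. w < length fr1 \<and> fr1 ! w) ws) @ st) p (cost + c)
        = (fr', pos', cost')"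
      using "2.prems"(1) True read by (simp add: fr1_def Let_def)
    then have "cost' + m * pending_reads ord fr' \<le> cost + c + m * pending_reads ord fr1
        \<and> pos' \<le> m \<and> length fr' = length fr1"
    proof (rule "2.IH"(1)[OF True fr1_def read[symmetric] refl])
      show "p \<le> m"
        using read_cost by simp
      show "\<forall>v<length fr1. \<forall>i\<in>set (ord v). i < m"
        using "2.prems"(3) by (simp add: fr1_def)
    qed
    moreover have "pending_reads ord fr = pending_reads ord fr1 + length (ord v)"
      using pending_reads_update_False True fr1_def by blast
    ultimately show ?thesis
      using read_cost by (simp add: fr1_def algebra_simps)
  next
    case False
    have "dfs_loop es ord fr st pos cost = (fr', pos', cost')"
      using "2.prems"(1) False by simp
    then show ?thesis
      by (rule "2.IH"(2)[OF False _ "2.prems"(2,3)])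
  qed
qed

lemma dfs_outer_cost_le:
  assumes "pos \<le> m" "\<forall>v<length fr. \<forall>i\<in>set (ord v). i < m"
  shows "dfs_outer es ord fr us pos cost \<le> cost + m * pending_reads ord fr"
  using assms
proof (induction us arbitrary: fr pos cost)
  case Nil
  then show ?case by simp
next
  case (Cons u us)
  obtain fr1 p c where loop: "dfs_loop es ord fr [u] pos cost = (fr1, p, c)"
    by (metis prod_cases3)
  have "c + m * pending_reads ord fr1 \<le> cost + m * pending_reads ord fr
      \<and> p \<le> m \<and> length fr1 = length fr"
    using dfs_loop_amortised_cost[OF loop] Cons.prems by blast
  moreover from this have "dfs_outer es ord fr1 us p c \<le> c + m * pending_reads ord fr1"
    using Cons.IH Cons.prems by auto
  ultimately show ?case
    using loop by simp
qed

lemma pending_reads_replicate_le: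
  assumes "\<forall>v<n. distinct (ord v) \<and> set (ord v) = {i. i < m \<and> src i = v}"
  shows "pending_reads ord (replicate n True) \<le> m"
proof -
  have "pending_reads ord (replicate n True) = (\<Sum>v<n. length (ord v))"
    unfolding pending_reads_def by (rule sum.cong) auto
  also have "\<dots> = (\<Sum>v<n. card (set (ord v)))"
    by (rule sum.cong) (use assms in \<open>auto simp: distinct_card[symmetric]\<close>)
  also have "\<dots> = card (\<Union>v<n. set (ord v))"
    by (rule card_UN_disjoint[symmetric]) (use assms in auto)
  also have "\<dots> \<le> card {..<m}"
    by (rule card_mono) (use assms in auto)
  finally show ?thesis
    by simp
qed

theorem theorem8:
  "\<exists>c::nat. \<forall>(n::nat) (es::(nat \<times> nat) list) (ord::nat \<Rightarrow> nat list).
     distinct es \<and> set es \<subseteq> {0..<n} \<times> {0..<n} \<and>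
     (\<forall>v<n. distinct (ord v) \<and> set (ord v) = {i. i < length es \<and> fst (es ! i) = v})
     \<longrightarrow> dfs_ra_trace n es ord \<le> c * (length es)\<^sup>2"
proof (intro exI[of _ 1] allI impI)
  fix n es and ord :: "nat \<Rightarrow> nat list"
  assume "distinct es \<and> set es \<subseteq> {0..<n} \<times> {0..<n} \<and>
     (\<forall>v<n. distinct (ord v) \<and> set (ord v) = {i. i < length es \<and> fst (es ! i) = v})"
  then have ord: "\<forall>v<n. distinct (ord v) \<and> set (ord v) = {i. i < length es \<and> fst (es ! i) = v}"
    by blast
  let ?m = "length es"
  have "\<forall>v<length (replicate n True). \<forall>i\<in>set (ord v). i < ?m"
    using ord by auto
  then have "dfs_ra_trace n es ord \<le> 0 + ?m * pending_reads ord (replicate n True)"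
    unfolding dfs_ra_trace_def by (rule dfs_outer_cost_le[OF le0])
  also have "\<dots> \<le> ?m * ?m"
    using pending_reads_replicate_le[OF ord] by simp
  finally show "dfs_ra_trace n es ord \<le> 1 * ?m\<^sup>2"
    by (simp add: power2_eq_square)
qed

end
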